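(* For $i=1,2$ let $\mathcal{G}_i$ be an $r_i$-regular graph with $n_i$ vertices, and let $\nu_{11},\ldots,\nu_{1n_1}$ be the signless Laplacian eigenvalues of $\mathcal{G}_1$. Then $\mathcal{G}_1\circledast\mathcal{G}_2$ is signless Laplacian integral if and only if $\mathcal{G}_2$ is signless Laplacian integral and, for each $i=1,2,\ldots,n_1$, the roots of $x-n_2-n_2\nu_{1i}-n_2\chi_{Q_{\mathcal{G}_2}}(x-n_2)$ are integers.
   Context: All graphs are simple, finite and undirected. $Q_{\mathcal{G}}=D_{\mathcal{G}}+A_{\mathcal{G}}$ is the signless Laplacian matrix (degree matrix plus adjacency matrix). A graph is signless Laplacian integral if all eigenvalues of its signless Laplacian matrix are integers. The signless Laplacian coronal of a graph $\mathcal{G}$ on $n$ vertices is the rational function $\chi_{Q_{\mathcal{G}}}(x)=\mathbf{1}_n^T(xI_n-Q_{\mathcal{G}})^{-1}\mathbf{1}_n$, $\mathbf{1}_n$ the all-ones vector; "roots" of the expression in the claim are the values of $x$ at which this rational function vanishes. The graph product $\mathcal{G}_1\circledast\mathcal{G}_2$ of $\mathcal{G}_1$ (vertices $u_1,\ldots,u_{n_1}$) and $\mathcal{G}_2$ (vertices $v_1,\ldots,v_{n_2}$) has vertex set $\{a_{ik},b_{ik}:1\le i\le n_1,1\le k\le n_2\}$ and edges: $a_{ik}a_{jl}$ for all $k,l$ whenever $u_iu_j\in E(\mathcal{G}_1)$; $b_{ri}b_{rj}$ for all $r$ whenever $v_iv_j\in E(\mathcal{G}_2)$; $a_{ip}b_{iq}$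 for all $i,p,q$. *)

theory Defs
  imports "HOL-Analysis.Analysis"
begin

definition simple_graph :: "('v::finite \<Rightarrow> 'v \<Rightarrow> bool) \<Rightarrow> bool" where
  "simple_graph E \<longleftrightarrow> (\<forall>u v. E u v \<longleftrightarrow> E v u) \<and> (\<forall>v. \<not> E v v)"

definition regular :: "('v::finite \<Rightarrow> 'v \<Rightarrow> bool) \<Rightarrow> nat \<Rightarrow> bool" where
  "regular E r \<longleftrightarrow> (\<forall>v. card {u. E v u} = r)"

definition sl_matrix :: "('v::finite \<Rightarrow> 'v \<Rightarrow> bool) \<Rightarrow> complex^'v^'v" where
  "sl_matrix E = (\<chi> i j. (if i = j then of_nat (card {k. E i k}) else 0) + (if E i j then 1 else 0))"

definition is_eigenvalue :: "complex^'n^'n \<Rightarrow> complex \<Rightarrow> bool" where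
  "is_eigenvalue A l \<longleftrightarrow> (\<exists>v. v \<noteq> 0 \<and> A *v v = l *s v)"

definition sl_integral :: "('v::finite \<Rightarrow> 'v \<Rightarrow> bool) \<Rightarrow> bool" where
  "sl_integral E \<longleftrightarrow> (\<forall>l. is_eigenvalue (sl_matrix E) l \<longrightarrow> l \<in> \<int>)"

text \<open>Coronal 1^T (xI - A)^{-1} 1 (meaningful wherever xI - A is invertible;
  it is a rational function of x).\<close>
definition coronal :: "complex^'n^'n \<Rightarrow> complex \<Rightarrow> complex" where
  "coronal A x = (\<Sum>i\<in>UNIV. \<Sum>j\<in>UNIV. matrix_inv ((\<chi> a b. if a = b then x else 0) - A) $ i $ j)"

text \<open>A root of a rational function f (given by its values off a finite set of poles):
  a point where the (reduced) rational function vanishes, i.e. f tends to 0 there.\<close>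
definition rat_root :: "(complex \<Rightarrow> complex) \<Rightarrow> complex \<Rightarrow> bool" where
  "rat_root f x \<longleftrightarrow> (f \<longlongrightarrow> 0) (at x)"

text \<open>The product G1 \<circledast> G2: Inl (i,k) = a_{ik}, Inr (i,k) = b_{ik}.\<close>
fun prod_graph :: "('a \<Rightarrow> 'a \<Rightarrow> bool) \<Rightarrow> ('b \<Rightarrow> 'b \<Rightarrow> bool) \<Rightarrow>
    ('a \<times> 'b) + ('a \<times> 'b) \<Rightarrow> ('a \<times> 'b) + ('a \<times> 'b) \<Rightarrow> bool" where
  "prod_graph E1 E2 (Inl (i, k)) (Inl (j, l)) = E1 i j"
| "prod_graph E1 E2 (Inr (r, i)) (Inr (s, j)) = (r = s \<and> E2 i j)"
| "prod_graph E1 E2 (Inl (i, p)) (Inr (j, q)) = (i = j)"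
| "prod_graph E1 E2 (Inr (j, q)) (Inl (i, p)) = (i = j)"

end

theory Submission
  imports Defs
begin

(* An eigenvector of
   Q(G2) whose eigenvalue mu differs from its row sum 2 r2 has entries summing to zero; copied onto
   every fibre b_i1, ..., b_in2 it becomes an eigenvector of the product for n2 + mu. An
   eigenvector c of Q(G1) for nu gives the vectors a_ik = alpha c_i, b_ik = beta c_i, which are
   eigenvectors for x exactly when (alpha, beta) is an eigenvector of the 2 x 2 matrix
   [n2 (nu + 1), n2; n2, n2 + 2 r2], that is, when (x - n2 - n2 nu) (x - n2 - 2 r2) = n2^2.
   Conversely, every eigenvector for an eigenvalue theta other than n2 (r1 + 1), with theta - n2
   outside the spectrum of Q(G2), has this form. Off its spectrum the coronal of Q(G2) is
   n2 / (t - 2 r2); so if G2 is integral, the rational function in the statement agrees near every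
   point with the quadratic divided by x - n2 - 2 r2, and the two have the same roots. *)

lemma is_eigenvalue_const_row_sums:
  fixes A :: "complex^'n^'n"
  assumes "A *v 1 = c *s 1"
  shows "is_eigenvalue A c"
  using assms unfolding is_eigenvalue_def by (intro exI[of _ 1]) (simp add: vec_eq_iff)

lemma eq_const_vec_if_not_eigenvalue:
  fixes A :: "complex^'n^'n"
  assumes rows: "A *v 1 = c *s 1" and not_eig: "\<not> is_eigenvalue A t"
    and b: "A *v b + s *s 1 = t *s b"
  shows "b = (s / (t - c)) *s 1"
proof -
  have "t \<noteq> c"
    using not_eig is_eigenvalue_const_row_sums[OF rows] by auto
  define z where "z = b - (s / (t - c)) *s 1"
  have Ab: "(A *v b) $ i = t * b $ i - s" for i
    using arg_cong[OF b, of "\<lambda>v. v $ i"] by (simp add: algebra_simps)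
  have A1: "(A *v 1) $ i = c" for i
    using arg_cong[OF rows, of "\<lambda>v. v $ i"] by simp
  have "A *v z = t *s z"
    using \<open>t \<noteq> c\<close> unfolding z_def
    by (simp add: matrix_vector_mult_diff_distrib vector_scalar_commute vec_eq_iff Ab A1 field_simps)
  then have "z = 0"
    using not_eig unfolding is_eigenvalue_def by blast
  then show ?thesis
    by (simp add: z_def)
qed

lemma coronal_const_row_sums:
  fixes A :: "complex^'n^'n"
  assumes rows: "A *v 1 = c *s 1" and not_eig: "\<not> is_eigenvalue A t"
  shows "coronal A t = of_nat CARD('n) / (t - c)"
proof -
  define M where "M = mat t - A"
  have mat_mult: "mat t *v x = t *s x" for x :: "complex^'n"
    by (simp add: vec_eq_iff matrix_vector_mult_def mat_def if_distrib if_distribR cong del: if_weak_cong)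
  have "\<forall>x. M *v x = 0 \<longrightarrow> x = 0"
    using not_eig unfolding is_eigenvalue_def M_def
    by (auto simp: matrix_vector_mult_diff_rdistrib mat_mult)
  then have "\<exists>M'. M ** M' = mat 1 \<and> M' ** M = mat 1"
    using invertible_left_inverse matrix_left_invertible_ker unfolding invertible_def by blast
  then have "M ** matrix_inv M = mat 1"
    unfolding matrix_inv_def by (rule someI_ex[THEN conjunct1])
  define u where "u = matrix_inv M *v 1"
  have "M *v u = 1"
    by (simp add: u_def matrix_vector_mul_assoc \<open>M ** matrix_inv M = mat 1\<close>)
  then have "A *v u + 1 *s 1 = t *s u"
    by (simp add: M_def matrix_vector_mult_diff_rdistrib mat_mult) (metis add.commute diff_add_cancel)
  then have u: "u = (1 / (t - c)) *s 1"
    by (rule eq_const_vec_if_not_eigenvalue[OF rows not_eig])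
  have "coronal A t = (\<Sum>i\<in>UNIV. u $ i)"
    by (simp add: coronal_def u_def M_def mat_def matrix_vector_mult_def)
  then show ?thesis
    by (simp add: u)
qed

lemma sum_mult_vec_symmetric_const_row_sums:
  fixes A :: "'a::comm_semiring_1^'n^'n"
  assumes "transpose A = A" and "A *v 1 = c *s 1"
  shows "(\<Sum>i\<in>UNIV. (A *v z) $ i) = c * (\<Sum>i\<in>UNIV. z $ i)"
proof -
  have sym: "A $ i $ j = A $ j $ i" for i j
    using assms(1) by (metis transpose_def vec_lambda_beta)
  have row: "(\<Sum>i\<in>UNIV. A $ j $ i) = c" for j
    using arg_cong[OF assms(2), of "\<lambda>v. v $ j"] by (simp add: matrix_vector_mult_def)
  have "(\<Sum>i\<in>UNIV. (A *v z) $ i) = (\<Sum>i\<in>UNIV. \<Sum>j\<in>UNIV. A $ i $ j * z $ j)"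
    by (simp add: matrix_vector_mult_def)
  also have "\<dots> = (\<Sum>j\<in>UNIV. (\<Sum>i\<in>UNIV. A $ i $ j) * z $ j)"
    by (subst sum.swap) (simp add: sum_distrib_right)
  also have "\<dots> = c * (\<Sum>j\<in>UNIV. z $ j)"
    by (simp add: sym row sum_distrib_left)
  finally show ?thesis .
qed

lemma sl_matrix_mult_nth:
  "(sl_matrix E *v v) $ u = of_nat (card {w. E u w}) * v $ u + (\<Sum>w | E u w. v $ w)"
proof -
  have "(sl_matrix E *v v) $ u =
      (\<Sum>w\<in>UNIV. (if u = w then of_nat (card {w. E u w}) * v $ w else 0) + (if E u w then v $ w else 0))"
    unfolding sl_matrix_def matrix_vector_mult_def by (auto intro!: sum.cong simp: ring_distribs)
  also have "\<dots> = of_nat (card {w. E u w}) * v $ u + (\<Sum>w | E u w. v $ w)"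
    by (simp add: sum.distrib sum.If_cases)
  finally show ?thesis .
qed

lemma regular_card_neighbours:
  "regular E r \<Longrightarrow> card {w. E u w} = r"
  by (simp add: regular_def)

lemma transpose_sl_matrix:
  "simple_graph E \<Longrightarrow> transpose (sl_matrix E) = sl_matrix E"
  by (auto simp: transpose_def sl_matrix_def simple_graph_def vec_eq_iff)

lemma sl_matrix_mult_ones:
  assumes "regular E r"
  shows "sl_matrix E *v 1 = (2 * of_nat r) *s 1"
  using assms by (simp add: vec_eq_iff sl_matrix_mult_nth regular_card_neighbours)

lemma prod_graph_neighbours_Inl:
  "{w. prod_graph E1 E2 (Inl (i, k)) w} = Inl ` ({j. E1 i j} \<times> UNIV) \<union> Inr ` ({i} \<times> UNIV)"
  (is "?N = ?S")
proof (rule set_eqI)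
  fix w show "w \<in> ?N \<longleftrightarrow> w \<in> ?S"
    by (cases w) auto
qed

lemma prod_graph_neighbours_Inr:
  "{w. prod_graph E1 E2 (Inr (i, k)) w} = Inl ` ({i} \<times> UNIV) \<union> Inr ` ({i} \<times> {l. E2 k l})"
  (is "?N = ?S")
proof (rule set_eqI)
  fix w show "w \<in> ?N \<longleftrightarrow> w \<in> ?S"
    by (cases w) auto
qed

lemma sum_Inl_Inr_image:
  assumes "finite A" "finite B"
  shows "(\<Sum>w\<in>Inl ` A \<union> Inr ` B. f w) = (\<Sum>a\<in>A. f (Inl a)) + (\<Sum>b\<in>B. f (Inr b))"
  using assms by (subst sum.union_disjoint) (auto simp: sum.reindex)

lemma sl_matrix_prod_graph_Inl:
  fixes E1 :: "'a::finite \<Rightarrow> 'a \<Rightarrow> bool" and E2 :: "'b::finite \<Rightarrow> 'b \<Rightarrow> bool"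
  shows "(sl_matrix (prod_graph E1 E2) *v v) $ Inl (i, k) =
    of_nat (CARD('b) * (card {j. E1 i j} + 1)) * v $ Inl (i, k)
    + (\<Sum>j | E1 i j. \<Sum>l\<in>UNIV. v $ Inl (j, l)) + (\<Sum>q\<in>UNIV. v $ Inr (i, q))"
proof -
  have "card {w. prod_graph E1 E2 (Inl (i, k)) w} = CARD('b) * (card {j. E1 i j} + 1)"
    unfolding prod_graph_neighbours_Inl
    by (subst card_Un_disjoint) (auto simp: card_image card_cartesian_product)
  moreover have "(\<Sum>w | prod_graph E1 E2 (Inl (i, k)) w. v $ w) =
      (\<Sum>j | E1 i j. \<Sum>l\<in>UNIV. v $ Inl (j, l)) + (\<Sum>q\<in>UNIV. v $ Inr (i, q))"
    unfolding prod_graph_neighbours_Inl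
    by (simp add: sum_Inl_Inr_image sum.cartesian_product')
  ultimately show ?thesis
    by (simp add: sl_matrix_mult_nth add.assoc)
qed

lemma sl_matrix_prod_graph_Inr:
  fixes E1 :: "'a::finite \<Rightarrow> 'a \<Rightarrow> bool" and E2 :: "'b::finite \<Rightarrow> 'b \<Rightarrow> bool"
  shows "(sl_matrix (prod_graph E1 E2) *v v) $ Inr (i, k) =
    of_nat CARD('b) * v $ Inr (i, k) + (\<Sum>p\<in>UNIV. v $ Inl (i, p))
    + (sl_matrix E2 *v (\<chi> l. v $ Inr (i, l))) $ k"
proof -
  have "card {w. prod_graph E1 E2 (Inr (i, k)) w} = CARD('b) + card {l. E2 k l}"
    unfolding prod_graph_neighbours_Inr
    by (subst card_Un_disjoint) (auto simp: card_image card_cartesian_product)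
  moreover have "(\<Sum>w | prod_graph E1 E2 (Inr (i, k)) w. v $ w) =
      (\<Sum>p\<in>UNIV. v $ Inl (i, p)) + (\<Sum>l | E2 k l. v $ Inr (i, l))"
    unfolding prod_graph_neighbours_Inr
    by (simp add: sum_Inl_Inr_image sum.cartesian_product')
  ultimately show ?thesis
    by (simp add: sl_matrix_mult_nth algebra_simps)
qed

lemma vec_eq_Inl_InrI:
  fixes x y :: "'c^('a::finite \<times> 'b::finite + 'a \<times> 'b)"
  assumes "\<And>i k. x $ Inl (i, k) = y $ Inl (i, k)" and "\<And>i k. x $ Inr (i, k) = y $ Inr (i, k)"
  shows "x = y"
  using assms by (auto simp: vec_eq_iff split_sum_all)

definition lift_vec ::
    "complex \<Rightarrow> complex \<Rightarrow> complex^'a::finite \<Rightarrow> complex^('a \<times> 'b::finite + 'a \<times> 'b)"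
  where "lift_vec \<alpha> \<beta> c = (\<chi> w. case w of Inl (i, _) \<Rightarrow> \<alpha> * c $ i | Inr (i, _) \<Rightarrow> \<beta> * c $ i)"

lemma lift_vec_nth [simp]:
  "lift_vec \<alpha> \<beta> c $ Inl (i, k) = \<alpha> * c $ i"
  "lift_vec \<alpha> \<beta> c $ Inr (i, k) = \<beta> * c $ i"
  by (simp_all add: lift_vec_def)

lemma lift_vec_zero [simp]: "lift_vec \<alpha> \<beta> 0 = 0"
  by (rule vec_eq_Inl_InrI) simp_all

lemma lift_vec_nonzero:
  assumes "\<beta> \<noteq> 0" and "c \<noteq> 0"
  shows "lift_vec \<alpha> \<beta> c \<noteq> 0"
proof -
  obtain i where "c $ i \<noteq> 0"
    using assms(2) by (auto simp: vec_eq_iff)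
  then have "lift_vec \<alpha> \<beta> c $ Inr (i, k) \<noteq> 0" for k
    using assms(1) by simp
  then show ?thesis
    by (metis zero_index)
qed

lemma sl_matrix_prod_graph_lift_vec_Inl:
  fixes E1 :: "'a::finite \<Rightarrow> 'a \<Rightarrow> bool" and E2 :: "'b::finite \<Rightarrow> 'b \<Rightarrow> bool"
  shows "(sl_matrix (prod_graph E1 E2) *v lift_vec \<alpha> \<beta> c) $ Inl (i, k) =
    of_nat CARD('b) * (\<alpha> * (sl_matrix E1 *v c) $ i + (\<alpha> + \<beta>) * c $ i)"
proof -
  let ?N = "of_nat CARD('b) :: complex" and ?d = "card {j. E1 i j}"
  have "(sl_matrix (prod_graph E1 E2) *v lift_vec \<alpha> \<beta> c) $ Inl (i, k) =
      of_nat (CARD('b) * (?d + 1)) * (\<alpha> * c $ i) + (\<Sum>j | E1 i j. ?N * (\<alpha> * c $ j)) + ?N * (\<beta> * c $ i)"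
    by (simp add: sl_matrix_prod_graph_Inl)
  also have "\<dots> = ?N * (\<alpha> * (of_nat ?d * c $ i + (\<Sum>j | E1 i j. c $ j)) + (\<alpha> + \<beta>) * c $ i)"
    by (simp add: sum_distrib_left algebra_simps)
  also have "\<dots> = ?N * (\<alpha> * (sl_matrix E1 *v c) $ i + (\<alpha> + \<beta>) * c $ i)"
    by (simp add: sl_matrix_mult_nth)
  finally show ?thesis .
qed

lemma sl_matrix_prod_graph_lift_vec_Inr:
  fixes E1 :: "'a::finite \<Rightarrow> 'a \<Rightarrow> bool" and E2 :: "'b::finite \<Rightarrow> 'b \<Rightarrow> bool"
  assumes "regular E2 r2"
  shows "(sl_matrix (prod_graph E1 E2) *v lift_vec \<alpha> \<beta> c) $ Inr (i, k) =
    (of_nat CARD('b) * \<alpha> + (of_nat CARD('b) + 2 * of_nat r2) * \<beta>) * c $ i"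
proof -
  have "(\<chi> l. lift_vec \<alpha> \<beta> c $ Inr (i, l)) = (\<beta> * c $ i) *s (1 :: complex^'b)"
    by (simp add: vec_eq_iff)
  then show ?thesis
    by (simp add: sl_matrix_prod_graph_Inr vector_scalar_commute sl_matrix_mult_ones[OF assms]
        algebra_simps)
qed

lemma is_eigenvalue_prod_graph_of_sum_zero:
  fixes E1 :: "'a::finite \<Rightarrow> 'a \<Rightarrow> bool" and E2 :: "'b::finite \<Rightarrow> 'b \<Rightarrow> bool"
  assumes "z \<noteq> 0" and z: "sl_matrix E2 *v z = \<mu> *s z" and sum_z: "(\<Sum>k\<in>UNIV. z $ k) = 0"
  shows "is_eigenvalue (sl_matrix (prod_graph E1 E2)) (of_nat CARD('b) + \<mu>)"
proof -
  define v :: "complex^('a \<times> 'b + 'a \<times> 'b)"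
    where "v = (\<chi> w. case w of Inl _ \<Rightarrow> 0 | Inr (_, k) \<Rightarrow> z $ k)"
  have "sl_matrix (prod_graph E1 E2) *v v = (of_nat CARD('b) + \<mu>) *s v"
  proof (rule vec_eq_Inl_InrI)
    fix i k
    show "(sl_matrix (prod_graph E1 E2) *v v) $ Inl (i, k) =
        ((of_nat CARD('b) + \<mu>) *s v) $ Inl (i, k)"
      using sum_z by (simp add: sl_matrix_prod_graph_Inl v_def)
    have "(\<chi> l. v $ Inr (i, l)) = z"
      by (simp add: v_def vec_eq_iff)
    then show "(sl_matrix (prod_graph E1 E2) *v v) $ Inr (i, k) =
        ((of_nat CARD('b) + \<mu>) *s v) $ Inr (i, k)"
      by (simp add: sl_matrix_prod_graph_Inr z v_def algebra_simps)
  qed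
  moreover have "v \<noteq> 0"
  proof -
    obtain k where "z $ k \<noteq> 0"
      using assms(1) by (auto simp: vec_eq_iff)
    then have "v $ Inr (i, k) \<noteq> 0" for i
      by (simp add: v_def)
    then show ?thesis
      by (metis zero_index)
  qed
  ultimately show ?thesis
    unfolding is_eigenvalue_def by blast
qed

lemma sl_integral_of_sl_integral_prod_graph:
  fixes E1 :: "'a::finite \<Rightarrow> 'a \<Rightarrow> bool" and E2 :: "'b::finite \<Rightarrow> 'b \<Rightarrow> bool"
  assumes "simple_graph E2" and "regular E2 r2" and prod: "sl_integral (prod_graph E1 E2)"
  shows "sl_integral E2"
  unfolding sl_integral_def
proof (intro allI impI)
  fix \<mu> assume "is_eigenvalue (sl_matrix E2) \<mu>"
  then obtain z where "z \<noteq> 0" and z: "sl_matrix E2 *v z = \<mu> *s z"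
    unfolding is_eigenvalue_def by blast
  have "\<mu> * (\<Sum>k\<in>UNIV. z $ k) = 2 * of_nat r2 * (\<Sum>k\<in>UNIV. z $ k)"
    using sum_mult_vec_symmetric_const_row_sums[OF transpose_sl_matrix[OF assms(1)]
        sl_matrix_mult_ones[OF assms(2)], of z]
    by (simp add: z sum_distrib_left)
  then consider "\<mu> = 2 * of_nat r2" | "(\<Sum>k\<in>UNIV. z $ k) = 0"
    by auto
  then show "\<mu> \<in> \<int>"
  proof cases
    case 2
    then have "of_nat CARD('b) + \<mu> \<in> \<int>"
      using is_eigenvalue_prod_graph_of_sum_zero[OF \<open>z \<noteq> 0\<close> z] prod unfolding sl_integral_def by blast
    then show ?thesis
      by (metis Ints_diff Ints_of_nat add_diff_cancel_left')
  qed simp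
qed

lemma is_eigenvalue_prod_graph_of_root:
  fixes E1 :: "'a::finite \<Rightarrow> 'a \<Rightarrow> bool" and E2 :: "'b::finite \<Rightarrow> 'b \<Rightarrow> bool"
  assumes "regular E2 r2" and "is_eigenvalue (sl_matrix E1) \<nu>"
    and root: "(x - of_nat CARD('b) - of_nat CARD('b) * \<nu>) * (x - of_nat CARD('b) - 2 * of_nat r2)
      = of_nat CARD('b) * of_nat CARD('b)"
  shows "is_eigenvalue (sl_matrix (prod_graph E1 E2)) x"
proof -
  define N :: complex where "N = of_nat CARD('b)"
  obtain c where "c \<noteq> 0" and c: "sl_matrix E1 *v c = \<nu> *s c"
    using assms(2) unfolding is_eigenvalue_def by blast
  define v :: "complex^('a \<times> 'b + 'a \<times> 'b)" where "v = lift_vec (x - N - 2 * of_nat r2) N c"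
  have "sl_matrix (prod_graph E1 E2) *v v = x *s v"
  proof (rule vec_eq_Inl_InrI)
    fix i k
    have "N * ((x - N - 2 * of_nat r2) * (\<nu> * c $ i) + (x - N - 2 * of_nat r2 + N) * c $ i)
        = x * ((x - N - 2 * of_nat r2) * c $ i)"
      using root[folded N_def] by algebra
    then show "(sl_matrix (prod_graph E1 E2) *v v) $ Inl (i, k) = (x *s v) $ Inl (i, k)"
      by (simp add: v_def sl_matrix_prod_graph_lift_vec_Inl c N_def)
    have "(N * (x - N - 2 * of_nat r2) + (N + 2 * of_nat r2) * N) * c $ i = x * (N * c $ i)"
      by algebra
    then show "(sl_matrix (prod_graph E1 E2) *v v) $ Inr (i, k) = (x *s v) $ Inr (i, k)"
      by (simp add: v_def sl_matrix_prod_graph_lift_vec_Inr[OF assms(1)] N_def)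
  qed
  moreover have "v \<noteq> 0"
    unfolding v_def using \<open>c \<noteq> 0\<close> by (intro lift_vec_nonzero) (simp_all add: N_def)
  ultimately show ?thesis
    unfolding is_eigenvalue_def by blast
qed

lemma prod_graph_eigenvector_eq_lift_vec:
  fixes E1 :: "'a::finite \<Rightarrow> 'a \<Rightarrow> bool" and E2 :: "'b::finite \<Rightarrow> 'b \<Rightarrow> bool"
  assumes "regular E1 r1" and "regular E2 r2"
    and v: "sl_matrix (prod_graph E1 E2) *v v = \<theta> *s v"
    and ne: "\<theta> \<noteq> of_nat (CARD('b) * (r1 + 1))"
    and not_eig: "\<not> is_eigenvalue (sl_matrix E2) (\<theta> - of_nat CARD('b))"
  shows "\<exists>c. v = lift_vec 1 (of_nat CARD('b) / (\<theta> - of_nat CARD('b) - 2 * of_nat r2)) c"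
proof -
  define N :: complex where "N = of_nat CARD('b)"
  define c where "c = (\<chi> i. ((\<Sum>j | E1 i j. \<Sum>l\<in>UNIV. v $ Inl (j, l)) + (\<Sum>q\<in>UNIV. v $ Inr (i, q)))
    / (\<theta> - of_nat (CARD('b) * (r1 + 1))))"
  have a: "v $ Inl (i, k) = c $ i" for i k
    using arg_cong[OF v, of "\<lambda>u. u $ Inl (i, k)"] ne
    by (simp add: sl_matrix_prod_graph_Inl regular_card_neighbours[OF assms(1)] c_def field_simps)
  have b: "(\<chi> k. v $ Inr (i, k)) = (N * c $ i / (\<theta> - N - 2 * of_nat r2)) *s 1" for i
  proof (rule eq_const_vec_if_not_eigenvalue[OF sl_matrix_mult_ones[OF assms(2)]])
    show "\<not> is_eigenvalue (sl_matrix E2) (\<theta> - N)"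
      using not_eig by (simp add: N_def)
    have "(sl_matrix E2 *v (\<chi> k. v $ Inr (i, k))) $ k + N * c $ i = (\<theta> - N) * v $ Inr (i, k)" for k
      using arg_cong[OF v, of "\<lambda>u. u $ Inr (i, k)"]
      by (simp add: sl_matrix_prod_graph_Inr a N_def algebra_simps)
    then show "sl_matrix E2 *v (\<chi> k. v $ Inr (i, k)) + (N * c $ i) *s 1 =
        (\<theta> - N) *s (\<chi> k. v $ Inr (i, k))"
      by (simp add: vec_eq_iff algebra_simps)
  qed
  have "v = lift_vec 1 (N / (\<theta> - N - 2 * of_nat r2)) c"
  proof (rule vec_eq_Inl_InrI)
    fix i k
    show "v $ Inl (i, k) = lift_vec 1 (N / (\<theta> - N - 2 * of_nat r2)) c $ Inl (i, k)"
      by (simp add: a)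
    show "v $ Inr (i, k) = lift_vec 1 (N / (\<theta> - N - 2 * of_nat r2)) c $ Inr (i, k)"
      using arg_cong[OF b, of "\<lambda>u. u $ k"] by simp
  qed
  then show ?thesis
    unfolding N_def by blast
qed

lemma prod_graph_eigenvalue_cases:
  fixes E1 :: "'a::finite \<Rightarrow> 'a \<Rightarrow> bool" and E2 :: "'b::finite \<Rightarrow> 'b \<Rightarrow> bool"
  assumes "regular E1 r1" and "regular E2 r2"
    and "is_eigenvalue (sl_matrix (prod_graph E1 E2)) \<theta>"
  obtains "\<theta> = of_nat (CARD('b) * (r1 + 1))"
    | "is_eigenvalue (sl_matrix E2) (\<theta> - of_nat CARD('b))"
    | \<nu> where "is_eigenvalue (sl_matrix E1) \<nu>"
      and "(\<theta> - of_nat CARD('b) - of_nat CARD('b) * \<nu>) * (\<theta> - of_nat CARD('b) - 2 * of_nat r2)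
        = of_nat CARD('b) * of_nat CARD('b)"
proof -
  define N :: complex where "N = of_nat CARD('b)"
  define e where "e = \<theta> - N - 2 * of_nat r2"
  obtain v where "v \<noteq> 0" and v: "sl_matrix (prod_graph E1 E2) *v v = \<theta> *s v"
    using assms(3) unfolding is_eigenvalue_def by blast
  consider "\<theta> = of_nat (CARD('b) * (r1 + 1))" | "is_eigenvalue (sl_matrix E2) (\<theta> - N)"
    | "\<theta> \<noteq> of_nat (CARD('b) * (r1 + 1))" and "\<not> is_eigenvalue (sl_matrix E2) (\<theta> - N)"
    by blast
  then show ?thesis
  proof cases
    case 3
    have "e \<noteq> 0"
      using 3(2) is_eigenvalue_const_row_sums[OF sl_matrix_mult_ones[OF assms(2)]]
      by (auto simp: e_def)
    obtain c where v_lift: "v = lift_vec 1 (N / e) c"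
      using prod_graph_eigenvector_eq_lift_vec[OF assms(1,2) v 3[unfolded N_def]]
      unfolding N_def e_def by blast
    have "c \<noteq> 0"
      using \<open>v \<noteq> 0\<close> v_lift by auto
    define \<nu> where "\<nu> = (\<theta> - N - N * N / e) / N"
    have "sl_matrix E1 *v c = \<nu> *s c"
    proof -
      have "N * ((sl_matrix E1 *v c) $ i + (1 + N / e) * c $ i) = \<theta> * c $ i" for i
        using arg_cong[OF v, of "\<lambda>u. u $ Inl (i, undefined)"]
        by (simp add: v_lift sl_matrix_prod_graph_lift_vec_Inl N_def)
      then show ?thesis
        by (simp add: vec_eq_iff \<nu>_def N_def field_simps)
    qed
    then have "is_eigenvalue (sl_matrix E1) \<nu>"
      using \<open>c \<noteq> 0\<close> unfolding is_eigenvalue_def by blast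
    moreover have "(\<theta> - N - N * \<nu>) * e = N * N"
      using \<open>e \<noteq> 0\<close> by (simp add: \<nu>_def N_def field_simps)
    ultimately show ?thesis
      using that(3) unfolding N_def e_def by blast
  qed (use that N_def in auto)
qed

lemma eventually_not_Ints_at: "eventually (\<lambda>y::complex. y \<notin> \<int>) (at x)"
proof -
  have "closed (\<int> - {x})"
    by (rule closed_subset_Ints) auto
  then have "eventually (\<lambda>y. y \<in> UNIV - (\<int> - {x})) (nhds x)"
    by (intro eventually_nhds_in_open) (auto simp: open_Diff)
  then show ?thesis
    unfolding eventually_at_filter by (rule eventually_mono) auto
qed

lemma rat_root_coronal_iff:
  fixes E :: "'b::finite \<Rightarrow> 'b \<Rightarrow> bool"
  assumes "regular E r" and "sl_integral E"
  shows "rat_root (\<lambda>y. y - of_nat CARD('b) - of_nat CARD('b) * \<nu>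
      - of_nat CARD('b) * coronal (sl_matrix E) (y - of_nat CARD('b))) x \<longleftrightarrow>
    (x - of_nat CARD('b) - of_nat CARD('b) * \<nu>) * (x - of_nat CARD('b) - 2 * of_nat r)
      = of_nat CARD('b) * of_nat CARD('b)"
proof -
  define N :: complex where "N = of_nat CARD('b)"
  define F where "F y = y - N - N * \<nu> - N * coronal (sl_matrix E) (y - N)" for y
  define q where "q y = (y - N - N * \<nu>) * (y - N - 2 * of_nat r) - N * N" for y
  have F_eq: "eventually (\<lambda>y. y - N - 2 * of_nat r \<noteq> 0 \<and> F y = q y / (y - N - 2 * of_nat r)) (at x)"
    using eventually_not_Ints_at[of x]
  proof eventually_elim
    case (elim y)
    have "y - N \<notin> \<int>"
      using elim by (metis Ints_add Ints_of_nat N_def diff_add_cancel)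
    then have "\<not> is_eigenvalue (sl_matrix E) (y - N)"
      using assms(2) unfolding sl_integral_def by blast
    then have "coronal (sl_matrix E) (y - N) = N / (y - N - 2 * of_nat r)"
      using coronal_const_row_sums[OF sl_matrix_mult_ones[OF assms(1)]] by (simp add: N_def)
    moreover have "y - N - 2 * of_nat r \<noteq> 0"
      using \<open>y - N \<notin> \<int>\<close> by (metis Ints_mult Ints_of_nat eq_iff_diff_eq_0 of_nat_numeral)
    ultimately show ?case
      by (simp add: F_def q_def field_simps)
  qed
  have q_cont: "(q \<longlongrightarrow> q x) (at x)"
    unfolding q_def by (intro tendsto_intros)
  have "(F \<longlongrightarrow> 0) (at x) \<longleftrightarrow> q x = 0"
  proof
    assume "(F \<longlongrightarrow> 0) (at x)"
    then have "((\<lambda>y. F y * (y - N - 2 * of_nat r)) \<longlongrightarrow> 0 * (x - N - 2 * of_nat r)) (at x)"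
      by (intro tendsto_intros)
    moreover have "eventually (\<lambda>y. F y * (y - N - 2 * of_nat r) = q y) (at x)"
      using F_eq by eventually_elim simp
    ultimately have "(q \<longlongrightarrow> 0) (at x)"
      using tendsto_cong by force
    then show "q x = 0"
      using tendsto_unique[OF _ q_cont] by simp
  next
    assume "q x = 0"
    then have "x - N - 2 * of_nat r \<noteq> 0"
      by (auto simp: q_def N_def)
    then have "((\<lambda>y. q y / (y - N - 2 * of_nat r)) \<longlongrightarrow> q x / (x - N - 2 * of_nat r)) (at x)"
      by (intro tendsto_intros q_cont) auto
    moreover have "eventually (\<lambda>y. q y / (y - N - 2 * of_nat r) = F y) (at x)"
      using F_eq by eventually_elim simp
    ultimately show "(F \<longlongrightarrow> 0) (at x)"
      using \<open>q x = 0\<close> tendsto_cong by fastforce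
  qed
  then show ?thesis
    unfolding rat_root_def F_def q_def N_def by simp
qed

lemma sl_integral_prod_graph_iff:
  fixes E1 :: "'a::finite \<Rightarrow> 'a \<Rightarrow> bool" and E2 :: "'b::finite \<Rightarrow> 'b \<Rightarrow> bool"
  assumes "regular E1 r1" and "simple_graph E2" and "regular E2 r2"
  shows "sl_integral (prod_graph E1 E2) \<longleftrightarrow> sl_integral E2 \<and>
    (\<forall>\<nu> x. is_eigenvalue (sl_matrix E1) \<nu> \<longrightarrow>
      (x - of_nat CARD('b) - of_nat CARD('b) * \<nu>) * (x - of_nat CARD('b) - 2 * of_nat r2)
        = of_nat CARD('b) * of_nat CARD('b) \<longrightarrow> x \<in> \<int>)"
    (is "?prod \<longleftrightarrow> ?rhs")
proof
  assume ?prod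
  then show ?rhs
    using sl_integral_of_sl_integral_prod_graph[OF assms(2,3)]
      is_eigenvalue_prod_graph_of_root[OF assms(3)]
    unfolding sl_integral_def by blast
next
  assume ?rhs
  show ?prod
    unfolding sl_integral_def
  proof (intro allI impI)
    fix \<theta> assume \<theta>: "is_eigenvalue (sl_matrix (prod_graph E1 E2)) \<theta>"
    show "\<theta> \<in> \<int>"
    proof (cases rule: prod_graph_eigenvalue_cases[OF assms(1,3) \<theta>])
      case 2
      then have "\<theta> - of_nat CARD('b) \<in> \<int>"
        using \<open>?rhs\<close> unfolding sl_integral_def by blast
      then show ?thesis
        by (metis Ints_add Ints_of_nat diff_add_cancel)
    qed (use \<open>?rhs\<close> in auto)
  qed
qed

theorem theorem7:
  fixes E1 :: "'a::finite \<Rightarrow> 'a \<Rightarrow> bool" and E2 :: "'b::finite \<Rightarrow> 'b \<Rightarrow> bool"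
    and r1 r2 :: nat
  assumes "simple_graph E1" and "regular E1 r1"
    and "simple_graph E2" and "regular E2 r2"
  shows "sl_integral (prod_graph E1 E2) \<longleftrightarrow>
    (sl_integral E2 \<and>
     (\<forall>\<nu>. is_eigenvalue (sl_matrix E1) \<nu> \<longrightarrow>
        (\<forall>x. rat_root (\<lambda>y. y - of_nat CARD('b) - of_nat CARD('b) * \<nu>
                 - of_nat CARD('b) * coronal (sl_matrix E2) (y - of_nat CARD('b))) x
             \<longrightarrow> x \<in> \<int>)))"
  using sl_integral_prod_graph_iff[OF assms(2-4)] rat_root_coronal_iff[OF assms(4)] by blast

end
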